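(* Let $\Gamma((r^S)_{S\subseteq I})$ be a quitting game satisfying $r^i_i=0$ for all $i\in I$. If all players are abnormal (i.e. $I_*=\emptyset$), then for every $\varepsilon>0$ the game has a stationary $\varepsilon$-equilibrium.
   Context: A quitting game $\Gamma((r^S)_{S\subseteq I})$: finite player set $I=[N]$, vectors $r^S\in[-1,1]^N$ for all $S\subseteq I$; at each stage $t\in\mathbb N$ each player chooses to continue or quit; with $t^*$ the first stage at which some player quits and $S^*$ the set of players quitting then ($S^*=\emptyset$ if nobody ever quits), the payoff is $r^{S^*}$. Write $r^i:=r^{\{i\}}$. A (behavior) strategy of player $i$ is a sequence $x_i=(x_i^t)_{t\in\mathbb N}\subset[0,1]$, $x_i^t$ being the probability of quitting at stage $t$ if nobody quit before; it is stationary if $x_i^t$ does not depend on $t$. $\gamma(x):=\mathbb E_x[r^{S^*}]$. A profile $x$ is an $\varepsilon$-equilibrium if $\gamma_i(x)\ge\gamma_i(x_i',x_{-i})-\varepsilon$ for all $i$ and all strategies $x_i'$. Normal players: $I_0:=I$, $I_{l+1}:=\{i\in I_l:\ \exists j\in I_l,\ j\neq i,\ r^j_i\le0\}$, and $I_*:=\bigcap_{l}I_l$. Players in $I_*$ are normal, the others abnormal. *)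

theory Defs
  imports "HOL-Analysis.Analysis"
begin

text \<open>A payoff system r maps a coalition S (the set of quitters)
to a payoff vector r S :: nat \<Rightarrow> real (component i = payoff of player i).
A strategy profile x maps player i and stage t to the probability x i t of quitting at
stage t (stages are indexed by nat, starting at 0).\<close>

definition players :: "nat \<Rightarrow> nat set" where
  "players N = {..<N}"

definition is_strategy :: "(nat \<Rightarrow> real) \<Rightarrow> bool" where
  "is_strategy y \<longleftrightarrow> (\<forall>t. 0 \<le> y t \<and> y t \<le> 1)"

definition is_profile :: "nat \<Rightarrow> (nat \<Rightarrow> nat \<Rightarrow> real) \<Rightarrow> bool" where
  "is_profile N x \<longleftrightarrow> (\<forall>i\<in>players N. is_strategy (x i))"

definition stationary :: "nat \<Rightarrow> (nat \<Rightarrow> nat \<Rightarrow> real) \<Rightarrow> bool" where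
  "stationary N x \<longleftrightarrow> (\<forall>i\<in>players N. \<forall>t. x i t = x i 0)"

definition alive :: "nat \<Rightarrow> (nat \<Rightarrow> nat \<Rightarrow> real) \<Rightarrow> nat \<Rightarrow> real" where
  "alive N x T = (\<Prod>t<T. \<Prod>i\<in>players N. 1 - x i t)"

text \<open>Probability that t* = t and S* = S.\<close>
definition stop_prob :: "nat \<Rightarrow> (nat \<Rightarrow> nat \<Rightarrow> real) \<Rightarrow> nat \<Rightarrow> nat set \<Rightarrow> real" where
  "stop_prob N x t S = alive N x t * (\<Prod>i\<in>S. x i t) * (\<Prod>i\<in>players N - S. 1 - x i t)"

text \<open>Expected payoff vector gamma(x) = E_x[r^{S*}], with S* = {} if nobody ever quits
(probability lim_T alive T).\<close>
definition gamma :: "nat \<Rightarrow> (nat set \<Rightarrow> nat \<Rightarrow> real) \<Rightarrow> (nat \<Rightarrow> nat \<Rightarrow> real) \<Rightarrow> nat \<Rightarrow> real" where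
  "gamma N r x j =
     (\<Sum>t. \<Sum>S\<in>Pow (players N) - {{}}. stop_prob N x t S * r S j)
     + lim (\<lambda>T. alive N x T) * r {} j"

definition eps_equilibrium ::
  "nat \<Rightarrow> (nat set \<Rightarrow> nat \<Rightarrow> real) \<Rightarrow> real \<Rightarrow> (nat \<Rightarrow> nat \<Rightarrow> real) \<Rightarrow> bool" where
  "eps_equilibrium N r \<epsilon> x \<longleftrightarrow> is_profile N x \<and>
     (\<forall>i\<in>players N. \<forall>y. is_strategy y \<longrightarrow> gamma N r (x(i := y)) i \<le> gamma N r x i + \<epsilon>)"

fun Ilev :: "nat \<Rightarrow> (nat set \<Rightarrow> nat \<Rightarrow> real) \<Rightarrow> nat \<Rightarrow> nat set" where
  "Ilev N r 0 = players N"
| "Ilev N r (Suc l) = {i \<in> Ilev N r l. \<exists>j\<in>Ilev N r l. j \<noteq> i \<and> r {j} i \<le> 0}"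

definition normal_players :: "nat \<Rightarrow> (nat set \<Rightarrow> nat \<Rightarrow> real) \<Rightarrow> nat set" where
  "normal_players N r = (\<Inter>l. Ilev N r l)"

end

theory Submission
  imports Defs
begin

text \<open>If nobody is normal, the elimination process defining \<open>I\<^sub>*\<close> eventually removes every player;
  peeling off the last eliminated players one by one yields either that all payoffs \<open>r\<^sup>\<emptyset>\<close> are
  nonnegative, in which case never quitting is an equilibrium, or a player \<open>k\<close> whose quitting
  alone is weakly good for everybody else and who does not prefer the others' outcomes to its
  own quitting (\<open>r\<^sup>\<emptyset>\<^sub>k \<le> 0\<close> or \<open>r\<^sup>q\<^sub>k \<le> 0\<close> for some \<open>q \<noteq> k\<close>). In the second case \<open>k\<close> quits at every stage
  with a small probability \<open>\<eta>\<close>, and \<open>q\<close> (if needed) with the much smaller probability \<open>\<delta> = \<eta>\<^sup>2\<close>.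
  At a stage with quitting probabilities \<open>z\<close>, the expected payoff differs from its first-order
  part \<open>\<Sum> z\<^sub>m r\<^sup>m\<close> by \<open>O(\<Sum>\<^sub>m\<^sub>\<noteq>\<^sub>n z\<^sub>m z\<^sub>n)\<close>, so payoffs are, up to second order, averages of solo payoffs
  \<open>r\<^sup>m\<close> weighted by quitting rates. As \<open>r\<^sup>i\<^sub>i = 0\<close>, a deviating player can change its own payoff only
  by second-order terms, by \<open>\<delta>/\<eta>\<close>, and by \<open>O(\<eta>)\<close>.\<close>

section \<open>Coalition probabilities\<close>

definition coalition_prob :: "'a set \<Rightarrow> ('a \<Rightarrow> real) \<Rightarrow> 'a set \<Rightarrow> real" where
  "coalition_prob P z S = (\<Prod>i\<in>S. z i) * (\<Prod>i\<in>P - S. 1 - z i)"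

lemma sum_Pow_insert:
  assumes "finite P" "a \<notin> P"
  shows "(\<Sum>S\<in>Pow (insert a P). F S) = (\<Sum>S\<in>Pow P. F S) + (\<Sum>S\<in>Pow P. F (insert a S))"
proof -
  have "inj_on (insert a) (Pow P)"
    using assms by (intro inj_onI) (metis PowD insert_absorb insert_ident subset_iff)
  moreover have "Pow P \<inter> insert a ` Pow P = {}"
    using assms by auto
  ultimately show ?thesis
    using assms by (simp add: Pow_insert sum.union_disjoint sum.reindex)
qed

lemma coalition_prob_insert_notin:
  assumes "finite P" "a \<notin> P" "S \<subseteq> P"
  shows "coalition_prob (insert a P) z S = (1 - z a) * coalition_prob P z S"
proof -
  have "insert a P - S = insert a (P - S)" "a \<notin> P - S"
    using assms by auto
  then show ?thesis
    using assms by (simp add: coalition_prob_def algebra_simps)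
qed

lemma coalition_prob_insert:
  assumes "finite P" "a \<notin> P" "S \<subseteq> P"
  shows "coalition_prob (insert a P) z (insert a S) = z a * coalition_prob P z S"
proof -
  have "insert a P - insert a S = P - S" "a \<notin> S" "finite S"
    using assms finite_subset by auto
  then show ?thesis
    by (simp add: coalition_prob_def algebra_simps)
qed

lemma coalition_prob_empty: "coalition_prob P z {} = (\<Prod>i\<in>P. 1 - z i)"
  by (simp add: coalition_prob_def)

lemma sum_coalition_prob: "finite P \<Longrightarrow> (\<Sum>S\<in>Pow P. coalition_prob P z S) = 1"
  using prod_add[of P z "\<lambda>i. 1 - z i"] by (simp add: coalition_prob_def)

lemma coalition_prob_nonneg:
  assumes "\<forall>m\<in>P. 0 \<le> z m \<and> z m \<le> 1" "S \<subseteq> P"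
  shows "0 \<le> coalition_prob P z S"
  using assms unfolding coalition_prob_def by (intro mult_nonneg_nonneg prod_nonneg) auto

text \<open>The right-hand side is \<open>4 * \<Sum> z m * z n\<close> over pairs \<open>m \<noteq> n\<close>: only coalitions of two or more
  players contribute to the error.\<close>

lemma sum_coalition_prob_mult_first_order:
  assumes "finite P" "\<forall>m\<in>P. 0 \<le> z m \<and> z m \<le> 1" "\<forall>S\<subseteq>P. \<bar>g S\<bar> \<le> 1"
  shows "\<bar>(\<Sum>S\<in>Pow P. coalition_prob P z S * g S) - g {} - (\<Sum>m\<in>P. z m * (g {m} - g {}))\<bar>
          \<le> 2 * ((\<Sum>m\<in>P. z m)\<^sup>2 - (\<Sum>m\<in>P. (z m)\<^sup>2))"
  using assms
proof (induction P arbitrary: g rule: finite_induct)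
  case empty
  then show ?case by (simp add: coalition_prob_def)
next
  case (insert a P)
  define h where "h S = g (insert a S)" for S
  define s where "s = (\<Sum>m\<in>P. z m)"
  define B where "B = (\<Sum>m\<in>P. z m)\<^sup>2 - (\<Sum>m\<in>P. (z m)\<^sup>2)"
  define E1 where "E1 = (\<Sum>S\<in>Pow P. coalition_prob P z S * g S) - g {} - (\<Sum>m\<in>P. z m * (g {m} - g {}))"
  define E2 where "E2 = (\<Sum>S\<in>Pow P. coalition_prob P z S * h S) - h {} - (\<Sum>m\<in>P. z m * (h {m} - h {}))"
  define W where "W = (\<Sum>m\<in>P. z m * (g {a,m} - g {a} - g {m} + g {}))"
  have z: "\<forall>m\<in>P. 0 \<le> z m \<and> z m \<le> 1" "0 \<le> z a" "z a \<le> 1"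
    using insert.prems by auto
  have "\<forall>S\<subseteq>P. \<bar>g S\<bar> \<le> 1" "\<forall>S\<subseteq>P. \<bar>h S\<bar> \<le> 1"
    using insert.prems(2) by (auto simp: h_def) (meson insert_mono)
  then have E1: "\<bar>E1\<bar> \<le> 2 * B" and E2: "\<bar>E2\<bar> \<le> 2 * B"
    unfolding E1_def E2_def B_def using insert.IH z(1) by blast+
  have W: "\<bar>W\<bar> \<le> 4 * s"
  proof -
    have "\<bar>W\<bar> \<le> (\<Sum>m\<in>P. \<bar>z m * (g {a,m} - g {a} - g {m} + g {})\<bar>)"
      unfolding W_def by (rule sum_abs)
    also have "\<dots> \<le> (\<Sum>m\<in>P. z m * 4)"
    proof (rule sum_mono)
      fix m assume m: "m \<in> P"
      have "\<bar>g {a,m}\<bar> \<le> 1" "\<bar>g {a}\<bar> \<le> 1" "\<bar>g {m}\<bar> \<le> 1" "\<bar>g {}\<bar> \<le> 1"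
        using insert.prems(2) m by auto
      then show "\<bar>z m * (g {a,m} - g {a} - g {m} + g {})\<bar> \<le> z m * 4"
        using z(1) m by (simp add: abs_mult mult_left_mono)
    qed
    finally show ?thesis
      by (simp add: s_def sum_distrib_right mult.commute)
  qed
  have split: "(\<Sum>S\<in>Pow (insert a P). coalition_prob (insert a P) z S * g S)
      = (1 - z a) * (\<Sum>S\<in>Pow P. coalition_prob P z S * g S) + z a * (\<Sum>S\<in>Pow P. coalition_prob P z S * h S)"
    using insert.hyps
    by (simp add: sum_Pow_insert sum_distrib_left h_def)
      (intro arg_cong2[where f = "(+)"] sum.cong;
        simp add: coalition_prob_insert_notin coalition_prob_insert)
  have h_singleton: "h {} = g {a}" "h {m} = g {a, m}" for m
    by (simp_all add: h_def)
  have W_eq: "W = (\<Sum>m\<in>P. z m * (h {m} - h {})) - (\<Sum>m\<in>P. z m * (g {m} - g {}))"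
    unfolding W_def h_singleton sum_subtractf[symmetric] by (simp add: algebra_simps)
  have "(\<Sum>m\<in>insert a P. z m * (g {m} - g {})) = z a * (g {a} - g {}) + (\<Sum>m\<in>P. z m * (g {m} - g {}))"
    using insert.hyps by simp
  then have "(\<Sum>S\<in>Pow (insert a P). coalition_prob (insert a P) z S * g S) - g {}
        - (\<Sum>m\<in>insert a P. z m * (g {m} - g {}))
      = (1 - z a) * E1 + z a * E2 + z a * W"
    unfolding split W_eq E1_def E2_def h_singleton by algebra
  also have "\<bar>\<dots>\<bar> \<le> (1 - z a) * \<bar>E1\<bar> + z a * \<bar>E2\<bar> + z a * \<bar>W\<bar>"
    using z by (simp add: abs_mult abs_triangle_ineq order_trans[OF abs_triangle_ineq add_mono])
  also have "\<dots> \<le> (1 - z a) * (2 * B) + z a * (2 * B) + z a * (4 * s)"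
    using z E1 E2 W by (intro add_mono mult_left_mono) auto
  also have "\<dots> = 2 * ((\<Sum>m\<in>insert a P. z m)\<^sup>2 - (\<Sum>m\<in>insert a P. (z m)\<^sup>2))"
    using insert.hyps by (simp add: B_def s_def power2_eq_square algebra_simps)
  finally show ?case .
qed

section \<open>Survival probabilities\<close>

context
  fixes A y :: "nat \<Rightarrow> real" and \<rho> :: real
  assumes A_0: "A 0 = 1" and A_Suc: "\<And>t. A (Suc t) = A t * ((1 - y t) * \<rho>)"
    and y: "\<And>t. 0 \<le> y t \<and> y t \<le> 1" and \<rho>: "0 \<le> \<rho>" "\<rho> \<le> 1"
begin

lemma survival_nonneg: "0 \<le> A t"
  by (induction t) (use y \<rho> in \<open>simp_all add: A_0 A_Suc\<close>)

lemma survival_le_power: "A t \<le> \<rho> ^ t"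
proof (induction t)
  case (Suc t)
  have "A t * ((1 - y t) * \<rho>) \<le> \<rho> ^ t * \<rho>"
    using Suc y[of t] \<rho> survival_nonneg[of t]
    by (intro mult_mono mult_left_le_one_le) auto
  then show ?case
    by (simp add: A_Suc mult.commute)
qed (simp add: A_0)

lemma survival_tendsto_0: "\<rho> < 1 \<Longrightarrow> A \<longlonglongrightarrow> 0"
  by (rule tendsto_sandwich[of "\<lambda>_. 0" _ _ "\<lambda>t. \<rho> ^ t"])
    (use \<rho> survival_nonneg survival_le_power in \<open>auto intro: LIMSEQ_power_zero\<close>)

lemma sum_survival_le: "\<rho> < 1 \<Longrightarrow> (\<Sum>t<n. A t) \<le> 1 / (1 - \<rho>)"
proof -
  assume "\<rho> < 1"
  have "(\<Sum>t<n. A t) \<le> (\<Sum>t<n. \<rho> ^ t)"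
    by (intro sum_mono survival_le_power)
  also have "\<dots> = (1 - \<rho> ^ n) / (1 - \<rho>)"
    using \<open>\<rho> < 1\<close> by (simp add: sum_gp_strict)
  also have "\<dots> \<le> 1 / (1 - \<rho>)"
    using \<open>\<rho> < 1\<close> \<rho> by (intro divide_right_mono) auto
  finally show ?thesis .
qed

text \<open>The quitting probability \<open>y t\<close> is paid for by the drop \<open>A t - A (Suc t)\<close> of the survival
  probability, and these drops telescope.\<close>

lemma sum_survival_mult_le:
  assumes X: "\<And>t. X t \<le> a + b * y t" and b: "0 \<le> b"
  shows "(\<Sum>t<n. A t * X t) \<le> a * (\<Sum>t<n. A t) + b"
proof -
  have "A t * y t \<le> A t - A (Suc t)" for t
  proof -
    have "A t * y t * (1 - \<rho>) \<le> A t * 1 * (1 - \<rho>)"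
      using survival_nonneg[of t] y[of t] \<rho> by (intro mult_right_mono mult_left_mono) auto
    then show ?thesis
      by (simp add: A_Suc algebra_simps)
  qed
  then have "(\<Sum>t<n. A t * y t) \<le> (\<Sum>t<n. A t - A (Suc t))"
    by (rule sum_mono)
  also have "\<dots> \<le> 1"
    using survival_nonneg[of n] by (simp add: sum_lessThan_telescope' A_0)
  finally have "b * (\<Sum>t<n. A t * y t) \<le> b"
    using b by (simp add: mult_left_le)
  moreover have "(\<Sum>t<n. A t * X t) \<le> (\<Sum>t<n. A t * (a + b * y t))"
    using X survival_nonneg by (intro sum_mono mult_left_mono)
  ultimately show ?thesis
    by (simp add: algebra_simps sum.distrib sum_distrib_left)
qed

end

section \<open>Payoffs\<close>

definition stage_payoff ::
    "nat \<Rightarrow> (nat set \<Rightarrow> nat \<Rightarrow> real) \<Rightarrow> (nat \<Rightarrow> nat \<Rightarrow> real) \<Rightarrow> nat \<Rightarrow> nat \<Rightarrow> real" where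
  "stage_payoff N r x t j =
     (\<Sum>S\<in>Pow (players N) - {{}}. coalition_prob (players N) (\<lambda>i. x i t) S * r S j)"

lemma finite_players [simp]: "finite (players N)"
  by (simp add: players_def)

lemma is_profileD: "is_profile N x \<Longrightarrow> i \<in> players N \<Longrightarrow> 0 \<le> x i t \<and> x i t \<le> 1"
  by (simp add: is_profile_def is_strategy_def)

lemma alive_0 [simp]: "alive N x 0 = 1"
  by (simp add: alive_def)

lemma alive_Suc: "alive N x (Suc t) = alive N x t * (\<Prod>i\<in>players N. 1 - x i t)"
  by (simp add: alive_def)

lemma alive_nonneg: "is_profile N x \<Longrightarrow> 0 \<le> alive N x t"
  unfolding alive_def by (auto intro!: prod_nonneg dest: is_profileD)

lemma alive_Suc_le: "is_profile N x \<Longrightarrow> alive N x (Suc t) \<le> alive N x t"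
  unfolding alive_Suc
  by (intro mult_left_le alive_nonneg prod_le_1) (auto dest: is_profileD)

lemma sum_stop_prob_mult:
  "(\<Sum>S\<in>Pow (players N) - {{}}. stop_prob N x t S * r S j) = alive N x t * stage_payoff N r x t j"
  unfolding stage_payoff_def stop_prob_def coalition_prob_def
  by (simp add: sum_distrib_left mult.assoc)

lemma eps_equilibrium_mono:
  "eps_equilibrium N r \<epsilon> x \<Longrightarrow> \<epsilon> \<le> \<epsilon>' \<Longrightarrow> eps_equilibrium N r \<epsilon>' x"
  unfolding eps_equilibrium_def by force

lemma gamma_never_quit: "gamma N r (\<lambda>m t. 0) j = r {} j"
proof -
  have "stage_payoff N r (\<lambda>m t. 0) t j = 0" for t
    unfolding stage_payoff_def coalition_prob_def
    by (intro sum.neutral) (auto dest: finite_subset[of _ "players N"])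
  moreover have "alive N (\<lambda>m t. 0) = (\<lambda>t. 1)"
    by (rule ext) (simp add: alive_def)
  ultimately show ?thesis
    unfolding gamma_def sum_stop_prob_mult by simp
qed

locale quitting_game =
  fixes N :: nat and r :: "nat set \<Rightarrow> nat \<Rightarrow> real"
  assumes bounded: "\<And>S i. S \<subseteq> players N \<Longrightarrow> i \<in> players N \<Longrightarrow> -1 \<le> r S i \<and> r S i \<le> 1"
    and diag: "\<And>i. i \<in> players N \<Longrightarrow> r {i} i = 0"
begin

lemma stage_payoff_first_order:
  assumes x: "is_profile N x" and j: "j \<in> players N"
  shows "\<bar>stage_payoff N r x t j - (\<Sum>m\<in>players N. x m t * r {m} j)\<bar>
     \<le> 2 * ((\<Sum>m\<in>players N. x m t)\<^sup>2 - (\<Sum>m\<in>players N. (x m t)\<^sup>2))"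
proof -
  define g where "g S = (if S = {} then 0 else r S j)" for S
  have "\<bar>g S\<bar> \<le> 1" if "S \<subseteq> players N" for S
    using bounded[OF that j] by (simp add: g_def abs_le_iff)
  then have "\<bar>(\<Sum>S\<in>Pow (players N). coalition_prob (players N) (\<lambda>i. x i t) S * g S) - g {}
        - (\<Sum>m\<in>players N. x m t * (g {m} - g {}))\<bar>
      \<le> 2 * ((\<Sum>m\<in>players N. x m t)\<^sup>2 - (\<Sum>m\<in>players N. (x m t)\<^sup>2))"
    using x by (intro sum_coalition_prob_mult_first_order) (auto dest: is_profileD)
  moreover have "(\<Sum>S\<in>Pow (players N). coalition_prob (players N) (\<lambda>i. x i t) S * g S)
      = stage_payoff N r x t j"
    unfolding stage_payoff_def
    by (subst sum.remove[of _ "{}"]) (auto simp: g_def intro!: sum.cong)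
  ultimately show ?thesis
    by (simp add: g_def)
qed

lemma abs_stage_payoff_le:
  assumes x: "is_profile N x" and j: "j \<in> players N"
  shows "\<bar>stage_payoff N r x t j\<bar> \<le> 1 - (\<Prod>i\<in>players N. 1 - x i t)"
proof -
  let ?p = "coalition_prob (players N) (\<lambda>i. x i t)"
  have "\<bar>stage_payoff N r x t j\<bar> \<le> (\<Sum>S\<in>Pow (players N) - {{}}. \<bar>?p S * r S j\<bar>)"
    unfolding stage_payoff_def by (rule sum_abs)
  also have "\<dots> \<le> (\<Sum>S\<in>Pow (players N) - {{}}. ?p S)"
  proof (rule sum_mono)
    fix S assume S: "S \<in> Pow (players N) - {{}}"
    have "0 \<le> ?p S"
      using S x by (intro coalition_prob_nonneg) (auto dest: is_profileD)
    moreover have "\<bar>r S j\<bar> \<le> 1"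
      using bounded[of S j] S j by (auto simp: abs_le_iff)
    ultimately show "\<bar>?p S * r S j\<bar> \<le> ?p S"
      by (simp add: abs_mult mult_left_le)
  qed
  also have "\<dots> = 1 - ?p {}"
    using sum_coalition_prob[of "players N" "\<lambda>i. x i t"]
    by (simp add: sum.remove[of "Pow (players N)" "{}"])
  finally show ?thesis
    by (simp add: coalition_prob_empty)
qed

lemma gamma_eq_series:
  assumes x: "is_profile N x" and j: "j \<in> players N"
  obtains L where "alive N x \<longlonglongrightarrow> L" "0 \<le> L" "\<And>t. L \<le> alive N x t"
    "summable (\<lambda>t. alive N x t * stage_payoff N r x t j)"
    "gamma N r x j = (\<Sum>t. alive N x t * stage_payoff N r x t j) + L * r {} j"
proof -
  have "decseq (alive N x)"
    using alive_Suc_le[OF x] by (simp add: decseq_SucI)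
  then obtain L where L: "alive N x \<longlonglongrightarrow> L" "\<And>t. L \<le> alive N x t"
    using decseq_convergent[of "alive N x" 0] alive_nonneg[OF x] by blast
  have "0 \<le> L"
    using L(1) alive_nonneg[OF x] by (intro LIMSEQ_le_const) auto
  moreover have "summable (\<lambda>t. alive N x t * stage_payoff N r x t j)"
  proof (rule summable_comparison_test)
    show "summable (\<lambda>t. alive N x t - alive N x (Suc t))"
      by (rule telescope_summable'[OF L(1)])
    have "\<bar>alive N x t * stage_payoff N r x t j\<bar> \<le> alive N x t * (1 - (\<Prod>i\<in>players N. 1 - x i t))" for t
      using abs_stage_payoff_le[OF x j] alive_nonneg[OF x]
      by (simp add: abs_mult mult_left_mono)
    then show "\<exists>M. \<forall>t\<ge>M. norm (alive N x t * stage_payoff N r x t j) \<le> alive N x t - alive N x (Suc t)"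
      by (simp add: alive_Suc algebra_simps)
  qed
  moreover have "gamma N r x j = (\<Sum>t. alive N x t * stage_payoff N r x t j) + L * r {} j"
    unfolding gamma_def sum_stop_prob_mult using limI[OF L(1)] by simp
  ultimately show ?thesis
    using that L by blast
qed

text \<open>The deviator's own quitting is worth \<open>r {i} i = 0\<close> to it, so it does not enter \<open>c\<close>.\<close>

lemma deviation_stage_bounds:
  assumes w: "\<forall>m\<in>players N. 0 \<le> w m \<and> w m \<le> 1" and y: "is_strategy y" and i: "i \<in> players N"
  defines "x \<equiv> (\<lambda>m t. w m)(i := y)"
    and "\<rho> \<equiv> \<Prod>m\<in>players N - {i}. 1 - w m"
    and "s \<equiv> \<Sum>m\<in>players N - {i}. w m"
    and "B \<equiv> (\<Sum>m\<in>players N - {i}. w m)\<^sup>2 - (\<Sum>m\<in>players N - {i}. (w m)\<^sup>2)"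
    and "c \<equiv> \<Sum>m\<in>players N - {i}. w m * r {m} i"
  shows "alive N x (Suc t) = alive N x t * ((1 - y t) * \<rho>)"
    and "stage_payoff N r x t i \<le> c + 2 * B + 4 * s * y t"
proof -
  have x: "is_profile N x"
    using w y by (auto simp: x_def is_profile_def is_strategy_def)
  have others: "(\<Sum>m\<in>players N - {i}. f (x m t)) = (\<Sum>m\<in>players N - {i}. f (w m))"
    "(\<Prod>m\<in>players N - {i}. f (x m t)) = (\<Prod>m\<in>players N - {i}. f (w m))" for f :: "real \<Rightarrow> real"
    by (auto simp: x_def intro: sum.cong prod.cong)
  show "alive N x (Suc t) = alive N x t * ((1 - y t) * \<rho>)"
    using i others(2)[of "\<lambda>v. 1 - v"] by (simp add: alive_Suc prod.remove \<rho>_def x_def)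
  have "(\<Sum>m\<in>players N. x m t * r {m} i) = c"
    using i diag[OF i] others(1) by (simp add: sum.remove c_def x_def)
  moreover have "(\<Sum>m\<in>players N. x m t)\<^sup>2 - (\<Sum>m\<in>players N. (x m t)\<^sup>2) = B + 2 * s * y t"
    using i others(1)[of id] others(1)[of "\<lambda>v. v\<^sup>2"]
    by (simp add: sum.remove B_def s_def x_def power2_eq_square algebra_simps)
  ultimately have "stage_payoff N r x t i - c \<le> 2 * (B + 2 * s * y t)"
    using abs_le_D1[OF stage_payoff_first_order[OF x i, of t]] by simp
  then show "stage_payoff N r x t i \<le> c + 2 * B + 4 * s * y t"
    by (simp add: algebra_simps)
qed

text \<open>By \<open>sum_survival_mult_le\<close> the term \<open>4 * s * y t\<close> adds up to at most \<open>4 * s\<close> over the play,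
  while \<open>c + 2 * B\<close> is discounted by the survival factor \<open>\<rho>\<close>.\<close>

lemma deviation_payoff_le:
  assumes w: "\<forall>m\<in>players N. 0 \<le> w m \<and> w m \<le> 1" and y: "is_strategy y" and i: "i \<in> players N"
  defines "x \<equiv> (\<lambda>m t. w m)(i := y)"
    and "\<rho> \<equiv> \<Prod>m\<in>players N - {i}. 1 - w m"
    and "s \<equiv> \<Sum>m\<in>players N - {i}. w m"
    and "B \<equiv> (\<Sum>m\<in>players N - {i}. w m)\<^sup>2 - (\<Sum>m\<in>players N - {i}. (w m)\<^sup>2)"
    and "c \<equiv> \<Sum>m\<in>players N - {i}. w m * r {m} i"
  shows "\<rho> < 1 \<Longrightarrow> gamma N r x i \<le> max 0 ((c + 2 * B) / (1 - \<rho>)) + 4 * s"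
    and "c + 2 * B \<le> 0 \<Longrightarrow> gamma N r x i \<le> 4 * s + max 0 (r {} i)"
proof -
  have x: "is_profile N x"
    using w y by (auto simp: x_def is_profile_def is_strategy_def)
  have "0 \<le> s"
    unfolding s_def using w by (auto intro: sum_nonneg)
  have survival: "\<And>t. alive N x (Suc t) = alive N x t * ((1 - y t) * \<rho>)"
    "\<And>t. 0 \<le> y t \<and> y t \<le> 1" "0 \<le> \<rho>" "\<rho> \<le> 1"
    using deviation_stage_bounds(1)[OF w y i] y w unfolding x_def \<rho>_def
    by (auto simp: is_strategy_def intro: prod_nonneg prod_le_1)
  have stage: "stage_payoff N r x t i \<le> c + 2 * B + 4 * s * y t" for t
    using deviation_stage_bounds(2)[OF w y i] unfolding x_def c_def B_def s_def .
  obtain L where L: "alive N x \<longlonglongrightarrow> L" "0 \<le> L" "\<And>t. L \<le> alive N x t"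
      "summable (\<lambda>t. alive N x t * stage_payoff N r x t i)"
      "gamma N r x i = (\<Sum>t. alive N x t * stage_payoff N r x t i) + L * r {} i"
    using gamma_eq_series[OF x i] by blast
  have partial: "(\<Sum>t<n. alive N x t * stage_payoff N r x t i)
      \<le> (c + 2 * B) * (\<Sum>t<n. alive N x t) + 4 * s" for n
    using sum_survival_mult_le[OF alive_0 survival stage] \<open>0 \<le> s\<close> by simp
  show "gamma N r x i \<le> max 0 ((c + 2 * B) / (1 - \<rho>)) + 4 * s" if "\<rho> < 1"
  proof -
    have "L = 0"
      using LIMSEQ_unique[OF L(1) survival_tendsto_0[OF alive_0 survival \<open>\<rho> < 1\<close>]] .
    moreover have "(\<Sum>t. alive N x t * stage_payoff N r x t i) \<le> max 0 ((c + 2 * B) / (1 - \<rho>)) + 4 * s"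
    proof (rule suminf_le_const[OF L(4)])
      fix n
      have "(c + 2 * B) * (\<Sum>t<n. alive N x t) \<le> max 0 (c + 2 * B) * (1 / (1 - \<rho>))"
        using sum_survival_le[OF alive_0 survival \<open>\<rho> < 1\<close>, of n] alive_nonneg[OF x]
        by (intro mult_mono) (auto intro: sum_nonneg)
      also have "\<dots> = max 0 ((c + 2 * B) / (1 - \<rho>))"
        using \<open>\<rho> < 1\<close> by (auto simp: max_def field_simps)
      finally show "(\<Sum>t<n. alive N x t * stage_payoff N r x t i) \<le> max 0 ((c + 2 * B) / (1 - \<rho>)) + 4 * s"
        using partial[of n] by linarith
    qed
    ultimately show ?thesis
      using L(5) by simp
  qed
  show "gamma N r x i \<le> 4 * s + max 0 (r {} i)" if "c + 2 * B \<le> 0"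
  proof -
    have "(\<Sum>t. alive N x t * stage_payoff N r x t i) \<le> 4 * s"
    proof (rule suminf_le_const[OF L(4)])
      fix n
      have "(c + 2 * B) * (\<Sum>t<n. alive N x t) \<le> 0"
        using that alive_nonneg[OF x] by (intro mult_nonpos_nonneg sum_nonneg)
      then show "(\<Sum>t<n. alive N x t * stage_payoff N r x t i) \<le> 4 * s"
        using partial[of n] by linarith
    qed
    moreover have "L * r {} i \<le> max 0 (r {} i)"
      using L(2) L(3)[of 0] by (cases "r {} i \<le> 0") (auto simp: mult_nonneg_nonpos mult_left_le_one_le)
    ultimately show ?thesis
      using L(5) by simp
  qed
qed

lemma stationary_payoff_ge:
  assumes w: "\<forall>m\<in>players N. 0 \<le> w m \<and> w m \<le> 1" and j: "j \<in> players N"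
    and \<rho>: "(\<Prod>m\<in>players N. 1 - w m) < 1"
  shows "((\<Sum>m\<in>players N. w m * r {m} j) - 2 * ((\<Sum>m\<in>players N. w m)\<^sup>2 - (\<Sum>m\<in>players N. (w m)\<^sup>2)))
       / (1 - (\<Prod>m\<in>players N. 1 - w m)) \<le> gamma N r (\<lambda>m t. w m) j"
proof -
  define \<rho> where "\<rho> = (\<Prod>m\<in>players N. 1 - w m)"
  define x where "x = (\<lambda>(m::nat) (t::nat). w m)"
  define X where "X = stage_payoff N r x 0 j"
  have x: "is_profile N x"
    using w by (simp add: x_def is_profile_def is_strategy_def)
  have "0 \<le> \<rho>" "\<rho> < 1"
    using w \<rho> unfolding \<rho>_def by (auto intro: prod_nonneg)
  have "alive N x = (\<lambda>t. \<rho> ^ t)"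
  proof
    show "alive N x t = \<rho> ^ t" for t
      by (induction t) (simp_all add: alive_Suc x_def \<rho>_def)
  qed
  moreover have "stage_payoff N r x t j = X" for t
    by (simp add: X_def stage_payoff_def x_def)
  ultimately have "gamma N r x j = (\<Sum>t. \<rho> ^ t * X) + lim (\<lambda>t. \<rho> ^ t) * r {} j"
    unfolding gamma_def sum_stop_prob_mult by simp
  also have "\<dots> = X / (1 - \<rho>)"
    using \<open>0 \<le> \<rho>\<close> \<open>\<rho> < 1\<close> suminf_geometric[of \<rho>] limI[OF LIMSEQ_power_zero[of \<rho>]]
    by (simp add: suminf_mult2[symmetric] summable_geometric)
  finally have "gamma N r x j = X / (1 - \<rho>)" .
  moreover have "(\<Sum>m\<in>players N. w m * r {m} j) - 2 * ((\<Sum>m\<in>players N. w m)\<^sup>2 - (\<Sum>m\<in>players N. (w m)\<^sup>2)) \<le> X"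
    using stage_payoff_first_order[OF x j, of 0] by (simp add: X_def x_def abs_le_iff)
  ultimately show ?thesis
    using \<open>\<rho> < 1\<close> by (simp add: x_def \<rho>_def[symmetric] divide_right_mono)
qed

end

section \<open>Elimination levels\<close>

text \<open>The levels \<open>Ilev\<close> with an arbitrary set of players in place of \<open>players N\<close>, so that
  players can be removed from the game.\<close>

fun elimination_level :: "'a set \<Rightarrow> ('a set \<Rightarrow> 'a \<Rightarrow> real) \<Rightarrow> nat \<Rightarrow> 'a set" where
  "elimination_level P r 0 = P"
| "elimination_level P r (Suc l) =
    {i \<in> elimination_level P r l. \<exists>j\<in>elimination_level P r l. j \<noteq> i \<and> r {j} i \<le> 0}"

lemma Ilev_eq_elimination_level: "Ilev N r l = elimination_level (players N) r l"
  by (induction l) simp_all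

lemma elimination_level_mono: "P' \<subseteq> P \<Longrightarrow> elimination_level P' r l \<subseteq> elimination_level P r l"
  by (induction l) auto

lemma elimination_level_antimono: "l \<le> m \<Longrightarrow> elimination_level P r m \<subseteq> elimination_level P r l"
  by (induction rule: dec_induct) auto

text \<open>Take \<open>k\<close> eliminated last. Every other player \<open>j\<close> is eliminated in passing from some level
  \<open>l\<close> to \<open>Suc l\<close> at which \<open>k\<close> is still present, hence \<open>r {k} j > 0\<close>.\<close>

lemma last_eliminated_player:
  assumes "finite P" "P \<noteq> {}" "(\<Inter>l. elimination_level P r l) = {}"
  obtains k where "k \<in> P" "\<And>j. j \<in> P \<Longrightarrow> j \<noteq> k \<Longrightarrow> 0 < r {k} j"
proof -
  define f where "f j = (LEAST l. j \<notin> elimination_level P r l)" for j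
  have f: "j \<notin> elimination_level P r (f j)" "j \<in> elimination_level P r (f j - 1)" "0 < f j"
    if "j \<in> P" for j
  proof -
    have "\<exists>l. j \<notin> elimination_level P r l"
      using assms(3) by auto
    then show "j \<notin> elimination_level P r (f j)"
      unfolding f_def by (rule LeastI_ex)
    then show "0 < f j"
      using that by (cases "f j") auto
    then show "j \<in> elimination_level P r (f j - 1)"
      unfolding f_def using not_less_Least diff_less zero_less_one by blast
  qed
  have "Max (f ` P) \<in> f ` P"
    using assms(1,2) by (intro Max_in) auto
  then obtain k where k: "k \<in> P" "f k = Max (f ` P)"
    by (metis imageE)
  show thesis
  proof (rule that[OF k(1)])
    fix j assume j: "j \<in> P" "j \<noteq> k"
    have "f j \<le> f k"
      using k(2) j assms(1) by simp
    then have "elimination_level P r (f k - 1) \<subseteq> elimination_level P r (f j - 1)"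
      by (intro elimination_level_antimono) simp
    then have "k \<in> elimination_level P r (f j - 1)"
      using f(2)[OF k(1)] by blast
    moreover have "Suc (f j - 1) = f j"
      using f(3)[OF j(1)] by simp
    ultimately show "0 < r {k} j"
      using f(1,2)[OF j(1)] j(2) elimination_level.simps(2)[of P r "f j - 1"] by force
  qed
qed

definition safe_quitter :: "'a set \<Rightarrow> ('a set \<Rightarrow> 'a \<Rightarrow> real) \<Rightarrow> 'a \<Rightarrow> bool" where
  "safe_quitter P r k \<longleftrightarrow> k \<in> P \<and> (\<forall>j\<in>P. j \<noteq> k \<longrightarrow> 0 \<le> r {k} j)
     \<and> (r {} k \<le> 0 \<or> (\<exists>q\<in>P. q \<noteq> k \<and> r {q} k \<le> 0))"

text \<open>If the last eliminated player \<open>k\<close> is not a safe quitter, it strictly prefers every outcome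
  other than its own quitting; removing it keeps the intersection of the levels empty, and
  the claim for the remaining players lifts back.\<close>

lemma safe_quitter_exists:
  assumes "finite P" "(\<Inter>l. elimination_level P r l) = {}"
  shows "(\<forall>i\<in>P. 0 \<le> r {} i) \<or> (\<exists>k. safe_quitter P r k)"
  using assms
proof (induction P rule: finite_psubset_induct)
  case (psubset P)
  show ?case
  proof (cases "P = {}")
    case False
    obtain k where k: "k \<in> P" "\<And>j. j \<in> P \<Longrightarrow> j \<noteq> k \<Longrightarrow> 0 < r {k} j"
      using last_eliminated_player[OF psubset.hyps(1) False psubset.prems] by blast
    show ?thesis
    proof (cases "safe_quitter P r k")
      case False
      moreover have "\<forall>j\<in>P. j \<noteq> k \<longrightarrow> 0 \<le> r {k} j"
        using k(2) by (simp add: less_imp_le)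
      ultimately have "\<not> (r {} k \<le> 0 \<or> (\<exists>q\<in>P. q \<noteq> k \<and> r {q} k \<le> 0))"
        using k(1) unfolding safe_quitter_def by blast
      then have k_content: "0 < r {} k" "\<And>q. q \<in> P \<Longrightarrow> q \<noteq> k \<Longrightarrow> 0 < r {q} k"
        by auto
      have "(\<Inter>l. elimination_level (P - {k}) r l) \<subseteq> (\<Inter>l. elimination_level P r l)"
        by (intro INF_mono' elimination_level_mono) auto
      then have "(\<Inter>l. elimination_level (P - {k}) r l) = {}"
        by (simp only: psubset.prems subset_empty)
      then have "(\<forall>i\<in>P - {k}. 0 \<le> r {} i) \<or> (\<exists>k'. safe_quitter (P - {k}) r k')"
        using k(1) by (intro psubset.IH) auto
      then show ?thesis
      proof
        assume "\<forall>i\<in>P - {k}. 0 \<le> r {} i"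
        then have "0 \<le> r {} i" if "i \<in> P" for i
          using k_content(1) that by (cases "i = k") auto
        then show ?thesis by blast
      next
        assume "\<exists>k'. safe_quitter (P - {k}) r k'"
        then obtain k' where "safe_quitter (P - {k}) r k'" ..
        moreover have "0 \<le> r {k'} k"
          using k_content(2)[of k'] \<open>safe_quitter (P - {k}) r k'\<close> by (simp add: safe_quitter_def)
        ultimately have "safe_quitter P r k'"
          unfolding safe_quitter_def by blast
        then show ?thesis by blast
      qed
    qed blast
  qed simp
qed

section \<open>Equilibria\<close>

definition two_point :: "'a \<Rightarrow> real \<Rightarrow> 'a \<Rightarrow> real \<Rightarrow> 'a \<Rightarrow> real" where
  "two_point k \<eta> q \<delta> m = (if m = k then \<eta> else 0) + (if m = q then \<delta> else 0)"

lemma sum_two_point_mult: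
  assumes "k \<noteq> q" "finite A"
  shows "(\<Sum>m\<in>A. two_point k \<eta> q \<delta> m * f m)
    = (if k \<in> A then \<eta> * f k else 0) + (if q \<in> A then \<delta> * f q else 0)"
proof -
  have "(\<Sum>m\<in>A. two_point k \<eta> q \<delta> m * f m)
      = (\<Sum>m\<in>A. if m = k then \<eta> * f k else 0) + (\<Sum>m\<in>A. if m = q then \<delta> * f q else 0)"
    unfolding sum.distrib[symmetric] using assms(1) by (intro sum.cong) (auto simp: two_point_def)
  then show ?thesis
    using assms(2) by simp
qed

lemma sum_two_point:
  assumes "k \<noteq> q" "finite A"
  shows "(\<Sum>m\<in>A. two_point k \<eta> q \<delta> m) = (if k \<in> A then \<eta> else 0) + (if q \<in> A then \<delta> else 0)"
  using sum_two_point_mult[OF assms, of \<eta> \<delta> "\<lambda>_. 1"] by simp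

lemma sum_two_point_square:
  assumes "k \<noteq> q" "finite A"
  shows "(\<Sum>m\<in>A. (two_point k \<eta> q \<delta> m)\<^sup>2) = (if k \<in> A then \<eta>\<^sup>2 else 0) + (if q \<in> A then \<delta>\<^sup>2 else 0)"
  using sum_two_point_mult[OF assms, of \<eta> \<delta> "two_point k \<eta> q \<delta>"] assms(1)
  by (simp add: power2_eq_square two_point_def)

lemma prod_one_minus_two_point:
  assumes "k \<noteq> q" "finite A"
  shows "(\<Prod>m\<in>A. 1 - two_point k \<eta> q \<delta> m) = (if k \<in> A then 1 - \<eta> else 1) * (if q \<in> A then 1 - \<delta> else 1)"
proof -
  have "(\<Prod>m\<in>A. 1 - two_point k \<eta> q \<delta> m)
      = (\<Prod>m\<in>A. if m = k then 1 - \<eta> else 1) * (\<Prod>m\<in>A. if m = q then 1 - \<delta> else 1)"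
    unfolding prod.distrib[symmetric] using assms(1) by (intro prod.cong) (auto simp: two_point_def)
  then show ?thesis
    using assms(2) by simp
qed

lemmas two_point_simps = sum_two_point_mult sum_two_point sum_two_point_square prod_one_minus_two_point

context quitting_game
begin

lemma never_quit_equilibrium:
  assumes "\<forall>i\<in>players N. 0 \<le> r {} i"
  shows "eps_equilibrium N r 0 (\<lambda>m t. 0)"
  unfolding eps_equilibrium_def
proof (intro conjI ballI allI impI)
  show "is_profile N (\<lambda>m t. 0)"
    by (simp add: is_profile_def is_strategy_def)
  fix i y assume i: "i \<in> players N" and y: "is_strategy y"
  have "gamma N r ((\<lambda>m t. 0)(i := y)) i \<le> 4 * 0 + max 0 (r {} i)"
    using deviation_payoff_le(2)[of "\<lambda>_. 0" y i] y i by simp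
  then show "gamma N r ((\<lambda>m t. 0)(i := y)) i \<le> gamma N r (\<lambda>m t. 0) i + 0"
    using assms i by (simp add: gamma_never_quit)
qed

text \<open>Player \<open>k\<close> quits at every stage with probability \<open>\<eta>\<close> and player \<open>q\<close> with the much smaller
  probability \<open>\<delta>\<close>; \<open>\<delta> = 0\<close> covers the case that \<open>k\<close> dislikes the outcome in which nobody
  quits, and then \<open>q\<close> need not be a player.\<close>

context
  fixes k q :: nat and \<eta> \<delta> :: real
  assumes k: "k \<in> players N" and kq: "k \<noteq> q" and q: "q \<in> players N \<or> \<delta> = 0"
    and \<eta>: "0 < \<eta>" "\<eta> \<le> 1/2" and \<delta>: "0 \<le> \<delta>" "\<delta> \<le> 1/2"
begin

lemma two_point_le_1: "\<forall>m\<in>players N. 0 \<le> two_point k \<eta> q \<delta> m \<and> two_point k \<eta> q \<delta> m \<le> 1"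
  using \<eta> \<delta> kq by (auto simp: two_point_def)

lemma two_point_payoff_ge:
  assumes j: "j \<in> players N"
  shows "(\<eta> * r {k} j + \<delta> * r {q} j - 4 * \<eta> * \<delta>) / (1 - (1 - \<eta>) * (1 - \<delta>))
    \<le> gamma N r (\<lambda>m t. two_point k \<eta> q \<delta> m) j"
proof -
  have "(\<Prod>m\<in>players N. 1 - two_point k \<eta> q \<delta> m) = (1 - \<eta>) * (1 - \<delta>)"
    using k q kq by (auto simp: two_point_simps)
  moreover have "(1 - \<eta>) * (1 - \<delta>) < 1"
  proof -
    have "\<delta> * \<eta> \<le> \<delta>"
      using \<eta> \<delta> by (intro mult_left_le) auto
    then show ?thesis
      using \<eta> by (simp add: algebra_simps)
  qed
  moreover have "(\<Sum>m\<in>players N. two_point k \<eta> q \<delta> m * r {m} j) = \<eta> * r {k} j + \<delta> * r {q} j"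
    "(\<Sum>m\<in>players N. two_point k \<eta> q \<delta> m)\<^sup>2 - (\<Sum>m\<in>players N. (two_point k \<eta> q \<delta> m)\<^sup>2) = 2 * \<eta> * \<delta>"
    using k q kq by (auto simp: two_point_simps) (simp_all add: power2_eq_square algebra_simps)
  ultimately show ?thesis
    using stationary_payoff_ge[OF two_point_le_1 j] by (simp add: mult.assoc)
qed

lemma two_point_quit_prob_bounds:
  "\<eta> \<le> 1 - (1 - \<eta>) * (1 - \<delta>)" "1 - (1 - \<eta>) * (1 - \<delta>) \<le> \<eta> + \<delta>"
  using \<eta> \<delta> by (simp_all add: algebra_simps mult_left_le)

lemma two_point_second_order_le: "\<eta> * \<delta> / (1 - (1 - \<eta>) * (1 - \<delta>)) \<le> \<delta>"
proof -
  have "\<eta> * \<delta> \<le> (1 - (1 - \<eta>) * (1 - \<delta>)) * \<delta>"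
    using two_point_quit_prob_bounds(1) \<delta>(1) by (rule mult_right_mono)
  moreover have "0 < 1 - (1 - \<eta>) * (1 - \<delta>)"
    using two_point_quit_prob_bounds(1) \<eta> by linarith
  ultimately show ?thesis
    by (simp add: divide_le_eq mult.commute)
qed

lemma two_point_lower_estimate:
  assumes "-\<delta> \<le> c"
  shows "-(\<delta> / \<eta> + 4 * \<delta>) \<le> (c - 4 * \<eta> * \<delta>) / (1 - (1 - \<eta>) * (1 - \<delta>))"
proof -
  let ?D = "1 - (1 - \<eta>) * (1 - \<delta>)"
  have "-(\<delta> / \<eta> + 4 * \<delta>) = -((\<delta> + 4 * \<eta> * \<delta>) / \<eta>)"
    using \<eta> by (simp add: field_simps)
  also have "\<dots> \<le> -((\<delta> + 4 * \<eta> * \<delta>) / ?D)"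
    using two_point_quit_prob_bounds \<eta> \<delta> by (simp add: divide_left_mono)
  also have "\<dots> = -(\<delta> + 4 * \<eta> * \<delta>) / ?D"
    by (rule minus_divide_left)
  also have "\<dots> \<le> (c - 4 * \<eta> * \<delta>) / ?D"
    using two_point_quit_prob_bounds \<eta> assms by (intro divide_right_mono) auto
  finally show ?thesis .
qed

text \<open>Whatever \<open>k\<close> does, the outcomes it does not cause itself are worth at most \<open>0\<close> to it
  (\<open>r {q} k \<le> 0\<close>, resp. \<open>r {} k \<le> 0\<close> when \<open>\<delta> = 0\<close>), while its own quitting is worth \<open>r {k} k = 0\<close>.\<close>

lemma quitter_deviation_le:
  assumes y: "is_strategy y" and k_quits: "(\<delta> = 0 \<and> r {} k \<le> 0) \<or> (0 < \<delta> \<and> r {q} k \<le> 0)"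
  shows "gamma N r ((\<lambda>m t. two_point k \<eta> q \<delta> m)(k := y)) k
    \<le> gamma N r (\<lambda>m t. two_point k \<eta> q \<delta> m) k + (\<delta> / \<eta> + 12 * \<delta> + 4 * \<eta>)"
proof -
  have others: "(\<Sum>m\<in>players N - {k}. two_point k \<eta> q \<delta> m) = \<delta>"
    "(\<Sum>m\<in>players N - {k}. (two_point k \<eta> q \<delta> m)\<^sup>2) = \<delta>\<^sup>2"
    "(\<Sum>m\<in>players N - {k}. two_point k \<eta> q \<delta> m * r {m} k) = \<delta> * r {q} k"
    "(\<Prod>m\<in>players N - {k}. 1 - two_point k \<eta> q \<delta> m) = 1 - \<delta>"
    using q kq by (auto simp: two_point_simps)
  have stay: "(\<delta> * r {q} k - 4 * \<eta> * \<delta>) / (1 - (1 - \<eta>) * (1 - \<delta>))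
      \<le> gamma N r (\<lambda>m t. two_point k \<eta> q \<delta> m) k"
    using two_point_payoff_ge[OF k] diag[OF k] by simp
  show ?thesis
  proof (cases "\<delta> = 0")
    case True
    then have "gamma N r ((\<lambda>m t. two_point k \<eta> q \<delta> m)(k := y)) k \<le> 0"
      using deviation_payoff_le(2)[OF two_point_le_1 y k] others k_quits by simp
    then show ?thesis
      using stay \<eta> True by simp
  next
    case False
    then have "0 < \<delta>" "r {q} k \<le> 0" "-\<delta> \<le> \<delta> * r {q} k"
      using \<delta> k_quits q bounded[of "{q}" k] k by (auto simp: mult_left_mono[of "-1" _ \<delta>, simplified])
    then have "gamma N r ((\<lambda>m t. two_point k \<eta> q \<delta> m)(k := y)) k \<le> 4 * \<delta>"
      using deviation_payoff_le(1)[OF two_point_le_1 y k] others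
      by (simp add: max_def split: if_split_asm)
    then show ?thesis
      using stay two_point_lower_estimate[OF \<open>-\<delta> \<le> \<delta> * r {q} k\<close>] \<eta> \<open>0 < \<delta>\<close> by simp
  qed
qed

text \<open>No deviation gains \<open>q\<close> more than \<open>r {k} q\<close>, and the profile already gives nearly that,
  because \<open>q\<close> itself quits at the much smaller rate \<open>\<delta>\<close>.\<close>

lemma punisher_deviation_le:
  assumes y: "is_strategy y" and q: "q \<in> players N" and k_helps_q: "0 \<le> r {k} q"
  shows "gamma N r ((\<lambda>m t. two_point k \<eta> q \<delta> m)(q := y)) q
    \<le> gamma N r (\<lambda>m t. two_point k \<eta> q \<delta> m) q + (\<delta> / \<eta> + 12 * \<delta> + 4 * \<eta>)"
proof -
  let ?D = "1 - (1 - \<eta>) * (1 - \<delta>)"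
  have others: "(\<Sum>m\<in>players N - {q}. two_point k \<eta> q \<delta> m) = \<eta>"
    "(\<Sum>m\<in>players N - {q}. (two_point k \<eta> q \<delta> m)\<^sup>2) = \<eta>\<^sup>2"
    "(\<Sum>m\<in>players N - {q}. two_point k \<eta> q \<delta> m * r {m} q) = \<eta> * r {k} q"
    "(\<Prod>m\<in>players N - {q}. 1 - two_point k \<eta> q \<delta> m) = 1 - \<eta>"
    using k kq by (auto simp: two_point_simps)
  have "gamma N r ((\<lambda>m t. two_point k \<eta> q \<delta> m)(q := y)) q \<le> r {k} q + 4 * \<eta>"
    using deviation_payoff_le(1)[OF two_point_le_1 y q] others \<eta> k_helps_q by simp
  moreover have "\<eta> * r {k} q / ?D - 4 * \<eta> * \<delta> / ?D \<le> gamma N r (\<lambda>m t. two_point k \<eta> q \<delta> m) q"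
    using two_point_payoff_ge[OF q] diag[OF q] by (simp add: diff_divide_distrib)
  moreover have "r {k} q - \<delta> / \<eta> \<le> \<eta> * r {k} q / ?D"
  proof -
    have "r {k} q - \<eta> * r {k} q / ?D = r {k} q * (?D - \<eta>) / ?D"
      using two_point_quit_prob_bounds \<eta> by (simp add: field_simps)
    also have "\<dots> \<le> 1 * \<delta> / ?D"
      using two_point_quit_prob_bounds \<eta> k_helps_q bounded[of "{k}" q] k q
      by (intro divide_right_mono mult_mono) auto
    also have "\<dots> \<le> \<delta> / \<eta>"
      using two_point_quit_prob_bounds \<eta> \<delta> by (simp add: divide_left_mono)
    finally show ?thesis by simp
  qed
  moreover have "4 * \<eta> * \<delta> / ?D \<le> 4 * \<delta>"
    using two_point_second_order_le by simp
  ultimately show ?thesis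
    using \<delta> by linarith
qed

text \<open>As \<open>i\<close>'s own quitting is worth \<open>r {i} i = 0\<close>, a deviation changes only second-order terms,
  except that it may avoid a negative first-order value; that value is at least \<open>-\<delta>\<close> because
  \<open>r {k} i \<ge> 0\<close>.\<close>

lemma bystander_deviation_le:
  assumes y: "is_strategy y" and i: "i \<in> players N" "i \<noteq> k" "i \<noteq> q" and k_helps_i: "0 \<le> r {k} i"
  shows "gamma N r ((\<lambda>m t. two_point k \<eta> q \<delta> m)(i := y)) i
    \<le> gamma N r (\<lambda>m t. two_point k \<eta> q \<delta> m) i + (\<delta> / \<eta> + 12 * \<delta> + 4 * \<eta>)"
proof -
  let ?D = "1 - (1 - \<eta>) * (1 - \<delta>)"
  define c where "c = \<eta> * r {k} i + \<delta> * r {q} i"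
  have others: "(\<Sum>m\<in>players N - {i}. two_point k \<eta> q \<delta> m) = \<eta> + \<delta>"
    "(\<Sum>m\<in>players N - {i}. (two_point k \<eta> q \<delta> m)\<^sup>2) = \<eta>\<^sup>2 + \<delta>\<^sup>2"
    "(\<Sum>m\<in>players N - {i}. two_point k \<eta> q \<delta> m * r {m} i) = c"
    "(\<Prod>m\<in>players N - {i}. 1 - two_point k \<eta> q \<delta> m) = 1 - ?D"
    using k q kq i by (auto simp: two_point_simps c_def)
  have "0 < ?D"
    using two_point_quit_prob_bounds \<eta> by linarith
  then have dev: "gamma N r ((\<lambda>m t. two_point k \<eta> q \<delta> m)(i := y)) i
      \<le> max 0 ((c + 4 * \<eta> * \<delta>) / ?D) + 4 * (\<eta> + \<delta>)"
    using deviation_payoff_le(1)[OF two_point_le_1 y i(1)] others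
    by (simp add: power2_eq_square algebra_simps)
  have stay: "(c - 4 * \<eta> * \<delta>) / ?D \<le> gamma N r (\<lambda>m t. two_point k \<eta> q \<delta> m) i"
    using two_point_payoff_ge[OF i(1)] by (simp add: c_def)
  have "8 * \<eta> * \<delta> / ?D \<le> 8 * \<delta>"
    using two_point_second_order_le by simp
  moreover have "(c + 4 * \<eta> * \<delta>) / ?D = (c - 4 * \<eta> * \<delta>) / ?D + 8 * \<eta> * \<delta> / ?D"
    by (simp add: add_divide_distrib[symmetric])
  moreover have "-\<delta> \<le> c"
  proof -
    have "-\<delta> \<le> \<delta> * r {q} i"
      using q \<delta> bounded[of "{q}" i] i(1) by (auto simp: mult_left_mono[of "-1" _ \<delta>, simplified])
    moreover have "0 \<le> \<eta> * r {k} i"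
      using \<eta> k_helps_i by simp
    ultimately show ?thesis
      by (simp add: c_def)
  qed
  moreover have "0 \<le> \<delta> / \<eta>"
    using \<eta> \<delta> by simp
  ultimately show ?thesis
    using dev stay two_point_lower_estimate[of c] \<delta> by (simp add: max_def split: if_split_asm)
qed

lemma two_point_eps_equilibrium:
  assumes k_helps: "\<forall>j\<in>players N. j \<noteq> k \<longrightarrow> 0 \<le> r {k} j"
    and k_quits: "(\<delta> = 0 \<and> r {} k \<le> 0) \<or> (0 < \<delta> \<and> r {q} k \<le> 0)"
  shows "eps_equilibrium N r (\<delta> / \<eta> + 12 * \<delta> + 4 * \<eta>) (\<lambda>m t. two_point k \<eta> q \<delta> m)"
  unfolding eps_equilibrium_def
proof (intro conjI ballI allI impI)
  show "is_profile N (\<lambda>m t. two_point k \<eta> q \<delta> m)"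
    using two_point_le_1 by (simp add: is_profile_def is_strategy_def)
  fix i y assume "i \<in> players N" "is_strategy y"
  then consider "i = k" | "i = q" | "i \<noteq> k" "i \<noteq> q"
    by blast
  then show "gamma N r ((\<lambda>m t. two_point k \<eta> q \<delta> m)(i := y)) i
      \<le> gamma N r (\<lambda>m t. two_point k \<eta> q \<delta> m) i + (\<delta> / \<eta> + 12 * \<delta> + 4 * \<eta>)"
    using quitter_deviation_le punisher_deviation_le bystander_deviation_le
      \<open>i \<in> players N\<close> \<open>is_strategy y\<close> k_helps k_quits kq
    by cases auto
qed

end

lemma safe_quitter_stationary_eps_equilibrium:
  assumes k: "safe_quitter (players N) r k" and \<epsilon>: "0 < \<epsilon>"
  shows "\<exists>x. stationary N x \<and> eps_equilibrium N r \<epsilon> x"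
proof -
  define \<eta> where "\<eta> = min \<epsilon> 1 / 8"
  have \<eta>: "0 < \<eta>" "\<eta> \<le> 1/8" "8 * \<eta> \<le> \<epsilon>"
    using \<epsilon> by (auto simp: \<eta>_def)
  obtain q \<delta> where q: "k \<noteq> q" "q \<in> players N \<or> \<delta> = 0" and \<delta>: "0 \<le> \<delta>" "\<delta> \<le> 1/2"
    and k_quits: "(\<delta> = 0 \<and> r {} k \<le> 0) \<or> (0 < \<delta> \<and> r {q} k \<le> 0)"
    and small: "\<delta> / \<eta> + 12 * \<delta> + 4 * \<eta> \<le> \<epsilon>"
  proof (cases "r {} k \<le> 0")
    case True
    show thesis
      by (rule that[of "Suc k" 0]) (use True \<eta> in auto)
  next
    case False
    then obtain q where "q \<in> players N" "q \<noteq> k" "r {q} k \<le> 0"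
      using k by (auto simp: safe_quitter_def)
    moreover have "\<eta>\<^sup>2 \<le> \<eta> / 8" "\<eta>\<^sup>2 / \<eta> = \<eta>"
      using \<eta> mult_left_mono[of \<eta> "1/8" \<eta>] by (simp_all add: power2_eq_square)
    then have "\<eta>\<^sup>2 / \<eta> + 12 * \<eta>\<^sup>2 + 4 * \<eta> \<le> \<epsilon>" "\<eta>\<^sup>2 \<le> 1/2"
      using \<eta> by linarith+
    ultimately show thesis
      using \<eta> by (intro that[of q "\<eta>\<^sup>2"]) auto
  qed
  have "eps_equilibrium N r (\<delta> / \<eta> + 12 * \<delta> + 4 * \<eta>) (\<lambda>m t. two_point k \<eta> q \<delta> m)"
    using k q \<delta> \<eta> k_quits by (intro two_point_eps_equilibrium) (auto simp: safe_quitter_def)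
  then show ?thesis
    using small by (auto simp: stationary_def intro: eps_equilibrium_mono)
qed

end

theorem lemma2:
  fixes N :: nat and r :: "nat set \<Rightarrow> nat \<Rightarrow> real"
  assumes bounded: "\<And>S i. S \<subseteq> players N \<Longrightarrow> i \<in> players N \<Longrightarrow> -1 \<le> r S i \<and> r S i \<le> 1"
    and diag: "\<And>i. i \<in> players N \<Longrightarrow> r {i} i = 0"
    and all_abnormal: "normal_players N r = {}"
  shows "\<forall>\<epsilon>>0. \<exists>x. stationary N x \<and> eps_equilibrium N r \<epsilon> x"
proof (intro allI impI)
  fix \<epsilon> :: real assume "0 < \<epsilon>"
  interpret quitting_game N r
    by unfold_locales (simp_all add: bounded diag)
  have "(\<Inter>l. elimination_level (players N) r l) = {}"
    using all_abnormal by (simp add: normal_players_def Ilev_eq_elimination_level)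
  then consider "\<forall>i\<in>players N. 0 \<le> r {} i" | k where "safe_quitter (players N) r k"
    using safe_quitter_exists[OF finite_players] by blast
  then show "\<exists>x. stationary N x \<and> eps_equilibrium N r \<epsilon> x"
  proof cases
    case 1
    then have "eps_equilibrium N r \<epsilon> (\<lambda>m t. 0)"
      using never_quit_equilibrium eps_equilibrium_mono \<open>0 < \<epsilon>\<close> by fastforce
    then show ?thesis
      by (auto simp: stationary_def)
  next
    case 2
    then show ?thesis
      using safe_quitter_stationary_eps_equilibrium \<open>0 < \<epsilon>\<close> by blast
  qed
qed

end
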